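(* For every $A\in\mathcal{B}$, with $g_{11},g_{12}$ as defined from $A$, $$\phi(A)=\begin{pmatrix}g_{11}&g_{12}\\ -\det(A)\,(1+t^{-1}+t)\,\overline{g_{12}} & \det(A)\,\overline{g_{11}}\end{pmatrix}.$$
   Context: For a matrix $A$ or Laurent polynomial/rational function $f$ in $t$, $\overline{A}$, $\overline{f}$ denote the result of substituting $t\mapsto t^{-1}$. Let $J_3=\begin{pmatrix}1&-t^{-1}&-t^{-1}\\-t&1&-t^{-1}\\-t&-t&1\end{pmatrix}$, $v=(t,t^2,t^3)$ (a row vector) and $\vec{1}=(1,1,1)^T$. The formal Burau group is $\mathcal{B}=\{A\in\mathrm{GL}(3,\mathbb{Z}[t,t^{-1}]) : vA=v,\ A\vec 1=\vec 1,\ \overline{A}J_3A^T=J_3\}$. For $A=(A_{ij})\in\mathcal{B}$ put, for $k=1,2$, $f_{k1}=A_{k1}(1+t+t^2)-1$, $f_{k2}=A_{k1}+A_{k2}(1+t)-1$, and $g_{kl}=f_{kl}/(t(1+t))$. Define $\phi(A)=\begin{pmatrix}g_{11}&g_{12}\\ t^{-1}g_{11}+(1+t)g_{21}& t^{-1}g_{12}+(1+t)g_{22}\end{pmatrix}$. *)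

theory Defs
  imports "HOL-Analysis.Analysis" "HOL-Computational_Algebra.Polynomial"
          "HOL-Computational_Algebra.Fraction_Field"
begin

text \<open>Rational functions in t over the integers: the field of fractions of Z[t].
  Laurent polynomials Z[t,t^-1] are the subring of elements p / t^k.\<close>

type_synonym rfun = "int poly fract"

definition T :: rfun where "T = Fract [:0, 1:] 1"

definition laurent :: "rfun \<Rightarrow> bool" where
  "laurent x \<longleftrightarrow> (\<exists>p k. x = Fract p (monom 1 k))"

text \<open>p(t^-1) for a polynomial p: reflect_poly p / t^(degree p).\<close>
definition bar_poly :: "int poly \<Rightarrow> rfun" where
  "bar_poly p = Fract (reflect_poly p) (monom 1 (degree p))"

text \<open>The substitution t \<mapsto> t^-1 on rational functions.\<close>
definition bar :: "rfun \<Rightarrow> rfun" where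
  "bar x = (SOME y. \<exists>p q. q \<noteq> 0 \<and> x = Fract p q \<and> y = bar_poly p / bar_poly q)"

definition bar_mat :: "rfun^'n^'m \<Rightarrow> rfun^'n^'m" where
  "bar_mat A = (\<chi> i j. bar (A $ i $ j))"

definition laurent_mat :: "rfun^'n^'m \<Rightarrow> bool" where
  "laurent_mat A \<longleftrightarrow> (\<forall>i j. laurent (A $ i $ j))"

definition GL3_laurent :: "(rfun^3^3) set" where
  "GL3_laurent = {A. laurent_mat A \<and>
     (\<exists>B. laurent_mat B \<and> A ** B = mat 1 \<and> B ** A = mat 1)}"

definition J3 :: "rfun^3^3" where
  "J3 = vector [vector [1, - inverse T, - inverse T],
                vector [- T, 1, - inverse T],
                vector [- T, - T, 1]]"

definition vB :: "rfun^3" where "vB = vector [T, T^2, T^3]"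

definition one3 :: "rfun^3" where "one3 = vector [1, 1, 1]"

definition burau_group :: "(rfun^3^3) set" where
  "burau_group = {A \<in> GL3_laurent. vB v* A = vB \<and> A *v one3 = one3 \<and>
                    bar_mat A ** J3 ** transpose A = J3}"

text \<open>Entries are indexed 1,2,3 (in the numeral types 2 and 3).\<close>
definition f_fun :: "rfun^3^3 \<Rightarrow> 3 \<Rightarrow> nat \<Rightarrow> rfun" where
  "f_fun A k l = (if l = 1 then A $ k $ 1 * (1 + T + T^2) - 1
                  else A $ k $ 1 + A $ k $ 2 * (1 + T) - 1)"

definition g_fun :: "rfun^3^3 \<Rightarrow> 3 \<Rightarrow> nat \<Rightarrow> rfun" where
  "g_fun A k l = f_fun A k l / (T * (1 + T))"

definition phi :: "rfun^3^3 \<Rightarrow> rfun^2^2" where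
  "phi A = vector [vector [g_fun A 1 1, g_fun A 1 2],
                   vector [inverse T * g_fun A 1 1 + (1 + T) * g_fun A 2 1,
                           inverse T * g_fun A 1 2 + (1 + T) * g_fun A 2 2]]"

end

theory Submission
  imports Defs
begin

text \<open>The substitution \<open>t \<mapsto> t\<^sup>-\<^sup>1\<close> is a field endomorphism of the fraction field
  of \<open>\<int>[t]\<close>: it evaluates numerator and denominator at \<open>t\<^sup>-\<^sup>1\<close>. Hence \<open>bar (g\<^sub>1\<^sub>1)\<close> and \<open>bar (g\<^sub>1\<^sub>2)\<close>
  are explicit in the first row of \<open>bar A\<close>. Read in its first row, the relation
  \<open>bar A J\<^sub>3 A\<^sup>T = J\<^sub>3\<close> is a linear system with coefficient matrix \<open>A\<close>.
  Cramer's rule expresses \<open>det A\<close> times the first row of \<open>bar A\<close> through the cofactors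
  of \<open>A\<close>. The conditions \<open>v A = v\<close> and \<open>A 1 = 1\<close> leave only
  \<open>A\<^sub>2\<^sub>1, A\<^sub>2\<^sub>2, A\<^sub>3\<^sub>1, A\<^sub>3\<^sub>2\<close> free. After this substitution, the second row
  of \<open>\<phi>(A)\<close> reduces to two polynomial identities.\<close>

lemma map_poly_of_int_add:
  "map_poly (of_int :: int \<Rightarrow> 'a::comm_ring_1) (p + q) = map_poly of_int p + map_poly of_int q"
  by (rule poly_eqI) (simp add: coeff_map_poly)

lemma map_poly_of_int_mult:
  "map_poly (of_int :: int \<Rightarrow> 'a::comm_ring_1) (p * q) = map_poly of_int p * map_poly of_int q"
  by (induction p rule: pCons_induct)
    (simp_all add: mult_pCons_left map_poly_of_int_add map_poly_pCons map_poly_smult)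

lemma poly_map_of_int_reflect_poly:
  fixes x :: "'a::field"
  assumes "x \<noteq> 0"
  shows "poly (map_poly of_int (reflect_poly p)) x
           = x ^ degree p * poly (map_poly of_int p) (inverse x)"
  using assms
  by (induction p rule: pCons_induct)
    (simp_all add: reflect_poly_pCons' map_poly_of_int_add map_poly_pCons map_poly_monom poly_monom
      field_simps)

lemma of_int_rfun: "(of_int k :: rfun) = Fract [:k:] 1"
proof -
  have "(of_int k :: rfun) = Fract (of_int k) 1"
    by (cases k rule: int_cases) (simp_all add: of_nat_fract del: of_nat_Suc)
  then show ?thesis
    by (simp add: of_int_poly)
qed

lemma Fract_eq_poly_T: "Fract p 1 = poly (map_poly of_int p) T"
proof (induction p rule: pCons_induct)
  case (pCons a p)
  have "Fract (pCons a p) 1 = Fract [:a:] 1 + T * Fract p 1"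
    by (simp add: T_def)
  then show ?case
    using pCons by (simp add: map_poly_pCons) (simp add: of_int_rfun)
qed (simp add: Zero_fract_def)

lemma T_nonzero: "T \<noteq> 0"
  by (simp add: T_def eq_fract Zero_fract_def)

lemma one_plus_T_nonzero: "1 + T \<noteq> 0"
  by (simp add: T_def One_fract_def Zero_fract_def eq_fract one_pCons)

definition eval_inverse_T :: "int poly \<Rightarrow> rfun" where
  "eval_inverse_T p = poly (map_poly of_int p) (inverse T)"

lemma bar_poly_eq_eval_inverse_T: "bar_poly p = eval_inverse_T p"
proof -
  have "bar_poly p = Fract (reflect_poly p) 1 / Fract (monom 1 (degree p)) 1"
    by (simp add: bar_poly_def)
  also have "\<dots> = eval_inverse_T p"
    by (simp add: Fract_eq_poly_T poly_map_of_int_reflect_poly T_nonzero map_poly_monom poly_monom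
        eval_inverse_T_def)
  finally show ?thesis .
qed

lemma eval_inverse_T_nonzero: "q \<noteq> 0 \<Longrightarrow> eval_inverse_T q \<noteq> 0"
  by (simp flip: bar_poly_eq_eval_inverse_T add: bar_poly_def Zero_fract_def eq_fract)

lemma eval_inverse_T_mult: "eval_inverse_T (p * q) = eval_inverse_T p * eval_inverse_T q"
  by (simp add: eval_inverse_T_def map_poly_of_int_mult)

lemma eval_inverse_T_add: "eval_inverse_T (p + q) = eval_inverse_T p + eval_inverse_T q"
  by (simp add: eval_inverse_T_def map_poly_of_int_add)

lemma bar_Fract:
  assumes "q \<noteq> 0"
  shows "bar (Fract p q) = eval_inverse_T p / eval_inverse_T q"
  unfolding bar_def
proof (rule some_equality)
  show "\<exists>p' q'. q' \<noteq> 0 \<and> Fract p q = Fract p' q' \<and>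
      eval_inverse_T p / eval_inverse_T q = bar_poly p' / bar_poly q'"
    using assms by (auto simp: bar_poly_eq_eval_inverse_T)
next
  fix y
  assume "\<exists>p' q'. q' \<noteq> 0 \<and> Fract p q = Fract p' q' \<and> y = bar_poly p' / bar_poly q'"
  then obtain p' q' where "q' \<noteq> 0" "p * q' = p' * q" "y = eval_inverse_T p' / eval_inverse_T q'"
    using assms by (auto simp: eq_fract bar_poly_eq_eval_inverse_T)
  then show "y = eval_inverse_T p / eval_inverse_T q"
    using assms by (simp add: eval_inverse_T_nonzero frac_eq_eq flip: eval_inverse_T_mult)
qed

lemma bar_add: "bar (x + y) = bar x + bar y"
proof (cases x, cases y)
  fix a b c d :: "int poly"
  assume "x = Fract a b" "b \<noteq> 0" "y = Fract c d" "d \<noteq> 0"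
  then show ?thesis
    by (simp add: bar_Fract eval_inverse_T_add eval_inverse_T_mult eval_inverse_T_nonzero field_simps)
qed

lemma bar_mult: "bar (x * y) = bar x * bar y"
proof (cases x, cases y)
  fix a b c d :: "int poly"
  assume "x = Fract a b" "b \<noteq> 0" "y = Fract c d" "d \<noteq> 0"
  then show ?thesis
    by (simp add: bar_Fract eval_inverse_T_mult)
qed

lemma bar_zero: "bar 0 = 0"
  by (simp add: Zero_fract_def bar_Fract eval_inverse_T_def)

lemma bar_one: "bar 1 = 1"
  by (simp add: One_fract_def bar_Fract eval_inverse_T_def)

lemma bar_T: "bar T = inverse T"
  by (simp add: T_def bar_Fract eval_inverse_T_def map_poly_pCons)

lemma bar_uminus: "bar (- x) = - bar x"
  using bar_add[of "- x" x] by (simp add: bar_zero eq_neg_iff_add_eq_0)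

lemma bar_inverse: "bar (inverse x) = inverse (bar x)"
proof (cases "x = 0")
  case False
  then have "bar x * bar (inverse x) = 1"
    by (simp flip: bar_mult add: bar_one)
  then show ?thesis
    by (rule inverse_unique[symmetric])
qed (simp add: bar_zero)

lemma bar_diff: "bar (x - y) = bar x - bar y"
  using bar_add[of x "- y"] by (simp add: bar_uminus)

lemma bar_divide: "bar (x / y) = bar x / bar y"
  by (simp add: divide_inverse bar_mult bar_inverse)

lemma bar_power: "bar (x ^ n) = bar x ^ n"
  by (induction n) (simp_all add: bar_one bar_mult)

lemma cramer_3:
  fixes m11 m12 m13 m21 m22 m23 m31 m32 m33 x1 x2 x3 r1 r2 r3 :: "'a::comm_ring_1"
  assumes "x1*m11 + x2*m12 + x3*m13 = r1" "x1*m21 + x2*m22 + x3*m23 = r2"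
    "x1*m31 + x2*m32 + x3*m33 = r3"
  defines "D \<equiv> m11*m22*m33 + m12*m23*m31 + m13*m21*m32 - m11*m23*m32 - m12*m21*m33 - m13*m22*m31"
  shows "x1 * D = r1*(m22*m33 - m23*m32) - r2*(m12*m33 - m13*m32) + r3*(m12*m23 - m13*m22)"
    and "x2 * D = - r1*(m21*m33 - m23*m31) + r2*(m11*m33 - m13*m31) - r3*(m11*m23 - m13*m21)"
    and "x3 * D = r1*(m21*m32 - m22*m31) - r2*(m11*m32 - m12*m31) + r3*(m11*m22 - m12*m21)"
  unfolding D_def assms(1-3)[symmetric] by (simp_all add: algebra_simps)

text \<open>The coefficients of \<open>a\<^sub>k\<^sub>1, a\<^sub>k\<^sub>2, a\<^sub>k\<^sub>3\<close> in \<open>h1\<close>--\<open>h3\<close> form the first row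
  \<open>x\<close> of \<open>b J\<^sub>3\<close>. By Cramer's rule \<open>t d x\<^sub>j = Q\<^sub>j\<close>, and the \<open>Q\<^sub>j\<close> are \<open>t\<close> times the
  first row of \<open>J\<^sub>3\<close> times the cofactor matrix. Then solve \<open>x = b J\<^sub>3\<close> for \<open>b\<^sub>1, b\<^sub>2\<close>.\<close>

lemma det_mult_bar_first_row:
  fixes t d b1 b2 b3 a11 a12 a13 a21 a22 a23 a31 a32 a33 :: "'a::field"
  assumes t0: "t \<noteq> 0"
    and h1: "(b1 - t*b2 - t*b3) * a11 + (- inverse t*b1 + b2 - t*b3) * a12
              + (- inverse t*b1 - inverse t*b2 + b3) * a13 = 1"
    and h2: "(b1 - t*b2 - t*b3) * a21 + (- inverse t*b1 + b2 - t*b3) * a22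
              + (- inverse t*b1 - inverse t*b2 + b3) * a23 = - inverse t"
    and h3: "(b1 - t*b2 - t*b3) * a31 + (- inverse t*b1 + b2 - t*b3) * a32
              + (- inverse t*b1 - inverse t*b2 + b3) * a33 = - inverse t"
    and d: "d = a11*a22*a33 + a12*a23*a31 + a13*a21*a32 - a11*a23*a32 - a12*a21*a33 - a13*a22*a31"
  defines "Q1 \<equiv> t*(a22*a33 - a23*a32) + (a12*a33 - a13*a32) - (a12*a23 - a13*a22)"
    and "Q2 \<equiv> - t*(a21*a33 - a23*a31) - (a11*a33 - a13*a31) + (a11*a23 - a13*a21)"
    and "Q3 \<equiv> t*(a21*a32 - a22*a31) + (a11*a32 - a12*a31) - (a11*a22 - a12*a21)"
  shows "d * b1 * (1 + t) = - (Q2 + t * Q3)"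
    and "d * b2 * (t * (1 + t)) = - (Q1 + t * Q3)"
proof -
  define x1 where "x1 = b1 - t*b2 - t*b3"
  define x2 where "x2 = - inverse t*b1 + b2 - t*b3"
  define x3 where "x3 = - inverse t*b1 - inverse t*b2 + b3"
  have st: "inverse t * t = 1"
    using t0 by simp
  note cramer = cramer_3[OF h1[folded x1_def x2_def x3_def] h2[folded x1_def x2_def x3_def]
      h3[folded x1_def x2_def x3_def], folded d]
  have q1: "t * (x1 * d) = Q1" and q2: "t * (x2 * d) = Q2" and q3: "t * (x3 * d) = Q3"
    unfolding cramer Q1_def Q2_def Q3_def using st by (simp_all add: algebra_simps)
  have "b1 * (1 + t) = - t * (x2 + t * x3)"
    unfolding x2_def x3_def using st by (simp add: algebra_simps)
  from arg_cong[OF this, of "(*) d"] show "d * b1 * (1 + t) = - (Q2 + t * Q3)"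
    unfolding q2[symmetric] q3[symmetric] by (simp add: algebra_simps)
  have "b2 * (1 + t) = - (x1 + t * x3)"
    unfolding x1_def x3_def using st by (simp add: algebra_simps)
  from arg_cong[OF this, of "(*) (t * d)"] show "d * b2 * (t * (1 + t)) = - (Q1 + t * Q3)"
    unfolding q1[symmetric] q3[symmetric] by (simp add: algebra_simps)
qed

lemma burau_second_row_identities:
  fixes t d b1 b2 b3 a11 a12 a13 a21 a22 a23 a31 a32 a33 :: "'a::field"
  assumes t0: "t \<noteq> 0" and t1: "1 + t \<noteq> 0"
    and r1: "a11 + a12 + a13 = 1" and r2: "a21 + a22 + a23 = 1" and r3: "a31 + a32 + a33 = 1"
    and c1: "t * a11 + t^2 * a21 + t^3 * a31 = t"
    and c2: "t * a12 + t^2 * a22 + t^3 * a32 = t^2"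
    and h1: "(b1 - t*b2 - t*b3) * a11 + (- inverse t*b1 + b2 - t*b3) * a12
              + (- inverse t*b1 - inverse t*b2 + b3) * a13 = 1"
    and h2: "(b1 - t*b2 - t*b3) * a21 + (- inverse t*b1 + b2 - t*b3) * a22
              + (- inverse t*b1 - inverse t*b2 + b3) * a23 = - inverse t"
    and h3: "(b1 - t*b2 - t*b3) * a31 + (- inverse t*b1 + b2 - t*b3) * a32
              + (- inverse t*b1 - inverse t*b2 + b3) * a33 = - inverse t"
    and d: "d = a11*a22*a33 + a12*a23*a31 + a13*a21*a32 - a11*a23*a32 - a12*a21*a33 - a13*a22*a31"
  shows "a11*(1+t+t^2) - 1 + t*(1+t)*(a21*(1+t+t^2) - 1)
           = - (t^2 * d * (1+t+t^2) * (t*b1 + (1+t)*b2 - t))"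
    and "a11 + a12*(1+t) - 1 + t*(1+t)*(a21 + a22*(1+t) - 1) = t^2 * d * ((1+t+t^2)*b1 - t^2)"
proof -
  have "t * (a11 + t*a21 + t^2*a31) = t * 1"
    using c1 by (simp add: algebra_simps power2_eq_square power3_eq_cube)
  then have "a11 + t*a21 + t^2*a31 = 1"
    using mult_left_cancel[OF t0] by blast
  then have e11: "a11 = 1 - t*a21 - t^2*a31"
    by (simp add: algebra_simps)
  have "t * (a12 + t*a22 + t^2*a32) = t * t"
    using c2 by (simp add: algebra_simps power2_eq_square power3_eq_cube)
  then have "a12 + t*a22 + t^2*a32 = t"
    using mult_left_cancel[OF t0] by blast
  then have e12: "a12 = t - t*a22 - t^2*a32"
    by (simp add: algebra_simps)
  have e13: "a13 = 1 - a11 - a12" and e23: "a23 = 1 - a21 - a22" and e33: "a33 = 1 - a31 - a32"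
    using r1 r2 r3 by (simp_all add: algebra_simps)
  note db = det_mult_bar_first_row[OF t0 h1 h2 h3 d]
  have "(a11*(1+t+t^2) - 1 + t*(1+t)*(a21*(1+t+t^2) - 1)) * (1+t)
      = - (t * (1+t+t^2) * (t^2 * (d*b1*(1+t)) + d*b2*(t*(1+t)) * (1+t) - d*t^2*(1+t)))"
    unfolding db unfolding d e13 e23 e33 unfolding e11 e12 by algebra
  also have "\<dots> = - (t^2 * d * (1+t+t^2) * (t*b1 + (1+t)*b2 - t)) * (1+t)"
    by algebra
  finally show "a11*(1+t+t^2) - 1 + t*(1+t)*(a21*(1+t+t^2) - 1)
           = - (t^2 * d * (1+t+t^2) * (t*b1 + (1+t)*b2 - t))"
    by (rule mult_right_cancel[OF t1, THEN iffD1])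
  have "(a11 + a12*(1+t) - 1 + t*(1+t)*(a21 + a22*(1+t) - 1)) * (1+t)
      = t^2 * ((1+t+t^2) * (d*b1*(1+t)) - d*t^2*(1+t))"
    unfolding db unfolding d e13 e23 e33 unfolding e11 e12 by algebra
  also have "\<dots> = t^2 * d * ((1+t+t^2)*b1 - t^2) * (1+t)"
    by algebra
  finally show "a11 + a12*(1+t) - 1 + t*(1+t)*(a21 + a22*(1+t) - 1) = t^2 * d * ((1+t+t^2)*b1 - t^2)"
    by (rule mult_right_cancel[OF t1, THEN iffD1])
qed

lemma burau_second_row_fractions:
  fixes t d b1 b2 a11 a12 a21 a22 :: "'a::field"
  assumes t0: "t \<noteq> 0" and t1: "1 + t \<noteq> 0"
    and col1: "a11*(1+t+t^2) - 1 + t*(1+t)*(a21*(1+t+t^2) - 1)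
                 = - (t^2 * d * (1+t+t^2) * (t*b1 + (1+t)*b2 - t))"
    and col2: "a11 + a12*(1+t) - 1 + t*(1+t)*(a21 + a22*(1+t) - 1) = t^2 * d * ((1+t+t^2)*b1 - t^2)"
  shows "inverse t * ((a11*(1+t+t^2) - 1)/(t*(1+t))) + (1+t) * ((a21*(1+t+t^2) - 1)/(t*(1+t)))
          = - d * (1 + inverse t + t) * ((b1 + b2*(1 + inverse t) - 1)/(inverse t*(1 + inverse t)))"
    and "inverse t * ((a11 + a12*(1+t) - 1)/(t*(1+t))) + (1+t) * ((a21 + a22*(1+t) - 1)/(t*(1+t)))
          = d * ((b1*(1 + inverse t + inverse t^2) - 1)/(inverse t*(1 + inverse t)))"
proof -
  define u where "u = 1 + t"
  define w where "w = 1 + t + t^2"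
  have u0: "u \<noteq> 0"
    using t1 by (simp add: u_def)
  have k: "t^2 * u \<noteq> 0"
    using t0 u0 by simp
  have hu: "1 + inverse t = u / t"
    using t0 by (simp add: u_def field_simps)
  have hv: "1 + inverse t + t = w / t" and hw: "1 + inverse t + inverse t^2 = w / t^2"
    using t0 by (simp_all add: w_def field_simps power2_eq_square)
  have "(inverse t * ((a11*w - 1)/(t*u)) + u * ((a21*w - 1)/(t*u))) * (t^2 * u)
      = a11*w - 1 + t*u*(a21*w - 1)"
    using t0 u0 by (simp add: field_simps power2_eq_square)
  also have "\<dots> = - (t^2 * d * w * (t*b1 + u*b2 - t))"
    using col1 unfolding w_def u_def .
  also have "\<dots> = (- d * (w / t) * ((b1 + b2*(u / t) - 1)/(inverse t*(u / t)))) * (t^2 * u)"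
    using t0 u0 by (simp add: field_simps power2_eq_square)
  finally show "inverse t * ((a11*(1+t+t^2) - 1)/(t*(1+t))) + (1+t) * ((a21*(1+t+t^2) - 1)/(t*(1+t)))
          = - d * (1 + inverse t + t) * ((b1 + b2*(1 + inverse t) - 1)/(inverse t*(1 + inverse t)))"
    unfolding hv unfolding hu unfolding w_def[symmetric] unfolding u_def[symmetric]
    by (rule mult_right_cancel[OF k, THEN iffD1])
  have "(inverse t * ((a11 + a12*u - 1)/(t*u)) + u * ((a21 + a22*u - 1)/(t*u))) * (t^2 * u)
      = a11 + a12*u - 1 + t*u*(a21 + a22*u - 1)"
    using t0 u0 by (simp add: field_simps power2_eq_square)
  also have "\<dots> = t^2 * d * (w*b1 - t^2)"
    using col2 unfolding w_def u_def .
  also have "\<dots> = (d * ((b1*(w / t^2) - 1)/(inverse t*(u / t)))) * (t^2 * u)"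
    using t0 u0 by (simp add: field_simps power2_eq_square)
  finally show "inverse t * ((a11 + a12*(1+t) - 1)/(t*(1+t))) + (1+t) * ((a21 + a22*(1+t) - 1)/(t*(1+t)))
          = d * ((b1*(1 + inverse t + inverse t^2) - 1)/(inverse t*(1 + inverse t)))"
    unfolding hw unfolding hu unfolding u_def[symmetric]
    by (rule mult_right_cancel[OF k, THEN iffD1])
qed

lemma burau_group_row_sums:
  assumes "A \<in> burau_group"
  shows "A$1$1 + A$1$2 + A$1$3 = 1" and "A$2$1 + A$2$2 + A$2$3 = 1" and "A$3$1 + A$3$2 + A$3$3 = 1"
proof -
  have "A *v one3 = one3"
    using assms by (simp add: burau_group_def)
  from arg_cong[OF this, of "\<lambda>x. x$1"] arg_cong[OF this, of "\<lambda>x. x$2"]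
    arg_cong[OF this, of "\<lambda>x. x$3"]
  show "A$1$1 + A$1$2 + A$1$3 = 1" and "A$2$1 + A$2$2 + A$2$3 = 1" and "A$3$1 + A$3$2 + A$3$3 = 1"
    by (simp_all add: matrix_vector_mult_def sum_3 one3_def)
qed

lemma burau_group_columns:
  assumes "A \<in> burau_group"
  shows "T * A$1$1 + T^2 * A$2$1 + T^3 * A$3$1 = T"
    and "T * A$1$2 + T^2 * A$2$2 + T^3 * A$3$2 = T^2"
proof -
  have "vB v* A = vB"
    using assms by (simp add: burau_group_def)
  from arg_cong[OF this, of "\<lambda>x. x$1"] arg_cong[OF this, of "\<lambda>x. x$2"]
  show "T * A$1$1 + T^2 * A$2$1 + T^3 * A$3$1 = T"
    and "T * A$1$2 + T^2 * A$2$2 + T^3 * A$3$2 = T^2"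
    by (simp_all add: vector_matrix_mult_def sum_3 vB_def)
qed

lemma burau_group_first_row_unitary:
  assumes "A \<in> burau_group"
  defines "b1 \<equiv> bar (A$1$1)" and "b2 \<equiv> bar (A$1$2)" and "b3 \<equiv> bar (A$1$3)"
  shows "(b1 - T*b2 - T*b3) * A$1$1 + (- inverse T*b1 + b2 - T*b3) * A$1$2
           + (- inverse T*b1 - inverse T*b2 + b3) * A$1$3 = 1"
    and "(b1 - T*b2 - T*b3) * A$2$1 + (- inverse T*b1 + b2 - T*b3) * A$2$2
           + (- inverse T*b1 - inverse T*b2 + b3) * A$2$3 = - inverse T"
    and "(b1 - T*b2 - T*b3) * A$3$1 + (- inverse T*b1 + b2 - T*b3) * A$3$2
           + (- inverse T*b1 - inverse T*b2 + b3) * A$3$3 = - inverse T"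
proof -
  have "bar_mat A ** J3 ** transpose A = J3"
    using assms by (simp add: burau_group_def)
  moreover have "(bar_mat A ** J3 ** transpose A) $ 1 $ k = (b1 - T*b2 - T*b3) * A$k$1
      + (- inverse T*b1 + b2 - T*b3) * A$k$2 + (- inverse T*b1 - inverse T*b2 + b3) * A$k$3" for k
    by (simp add: matrix_matrix_mult_def sum_3 J3_def bar_mat_def transpose_def b1_def b2_def b3_def
        algebra_simps)
  ultimately have "(b1 - T*b2 - T*b3) * A$k$1 + (- inverse T*b1 + b2 - T*b3) * A$k$2
      + (- inverse T*b1 - inverse T*b2 + b3) * A$k$3 = J3 $ 1 $ k" for k
    by simp
  from this[of 1] this[of 2] this[of 3] show
    "(b1 - T*b2 - T*b3) * A$1$1 + (- inverse T*b1 + b2 - T*b3) * A$1$2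
       + (- inverse T*b1 - inverse T*b2 + b3) * A$1$3 = 1"
    and "(b1 - T*b2 - T*b3) * A$2$1 + (- inverse T*b1 + b2 - T*b3) * A$2$2
       + (- inverse T*b1 - inverse T*b2 + b3) * A$2$3 = - inverse T"
    and "(b1 - T*b2 - T*b3) * A$3$1 + (- inverse T*b1 + b2 - T*b3) * A$3$2
       + (- inverse T*b1 - inverse T*b2 + b3) * A$3$3 = - inverse T"
    by (simp_all add: J3_def)
qed

lemma g_fun_eq:
  "g_fun A k 1 = (A$k$1 * (1 + T + T^2) - 1) / (T * (1 + T))"
  "g_fun A k 2 = (A$k$1 + A$k$2 * (1 + T) - 1) / (T * (1 + T))"
  by (simp_all add: g_fun_def f_fun_def)

lemma bar_g_fun_eq:
  "bar (g_fun A k 1)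
     = (bar (A$k$1) * (1 + inverse T + inverse T^2) - 1) / (inverse T * (1 + inverse T))"
  "bar (g_fun A k 2)
     = (bar (A$k$1) + bar (A$k$2) * (1 + inverse T) - 1) / (inverse T * (1 + inverse T))"
  unfolding g_fun_eq by (simp_all add: bar_divide bar_mult bar_add bar_diff bar_one bar_T bar_power)

theorem corollary3p6:
  assumes "A \<in> burau_group"
  shows "phi A = vector [vector [g_fun A 1 1, g_fun A 1 2],
                         vector [- det A * (1 + inverse T + T) * bar (g_fun A 1 2),
                                 det A * bar (g_fun A 1 1)]]"
proof -
  note identities = burau_second_row_identities[OF T_nonzero one_plus_T_nonzero
      burau_group_row_sums[OF assms] burau_group_columns[OF assms]
      burau_group_first_row_unitary[OF assms] det_3]
  note fractions = burau_second_row_fractions[OF T_nonzero one_plus_T_nonzero identities]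
  show ?thesis
    unfolding phi_def bar_g_fun_eq unfolding g_fun_eq
    by (simp only: vec_eq_iff forall_2 vector_2 fractions simp_thms)
qed

end
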